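(* Let $\Omega_1,\Omega_2\subseteq\mathbb H$ be symmetric slice domains and $f:\Omega_1\to\Omega_2$ slice regular. Then: (i) $f^c$ is regular on $\Omega_1$ and $f^c(\Omega_1)\subseteq\Omega_2$; (ii) $f^c:\Omega_1\to\Omega_2$ is bijective if and only if $f:\Omega_1\to\Omega_2$ is; (iii) for all $x,y\in\mathbb R$ with $x+y\mathbb S\subseteq\Omega_1$, $\sup_{I\in\mathbb S}|f(x+yI)|=\sup_{I\in\mathbb S}|f^c(x+yI)|$ and $\inf_{I\in\mathbb S}|f(x+yI)|=\inf_{I\in\mathbb S}|f^c(x+yI)|$; (iv) $\sup_{q\in\Omega_1}|f(q)|=\sup_{q\in\Omega_1}|f^c(q)|$ and $\inf_{q\in\Omega_1}|f(q)|=\inf_{q\in\Omega_1}|f^c(q)|$.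
   Context: $\mathbb H$ quaternions, $\mathbb S=\{q:q^2=-1\}$, $\mathbb C_I=\mathbb R+I\mathbb R$, $\Omega_I=\Omega\cap\mathbb C_I$. Slice regular: $C^1$ on each $\Omega_I$ and annihilated by $\frac12(\partial_x+I\partial_y)$. Symmetric slice domain: a domain $\Omega$ meeting the real axis, each $\Omega_I$ a domain in $\mathbb C_I$, and $x+yI\in\Omega\Rightarrow x+y\mathbb S\subseteq\Omega$. Regular extension of $h$ holomorphic on $\Omega_I$: $\mathrm{ext}(h)(x+yJ)=\frac12(h(x+yI)+h(x-yI))+\frac12JI(h(x-yI)-h(x+yI))$. For fixed $I$ and $J\in\mathbb S$, $J\perp I$, a regular $f$ splits as $f_I=F+GJ$ with $F,G:\Omega_I\to\mathbb C_I$ holomorphic; the regular conjugate is $f^c=\mathrm{ext}\big(\overline{F(\bar z)}-G(z)J\big)$ (for $f=\sum q^na_n$, $f^c=\sum q^n\bar a_n$). *)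

theory Defs
  imports "HOL-Analysis.Analysis"
begin

datatype quat = Quat (Re: real) (Im1: real) (Im2: real) (Im3: real)

lemma quat_eqI [intro?]:
  "Re x = Re y \<Longrightarrow> Im1 x = Im1 y \<Longrightarrow> Im2 x = Im2 y \<Longrightarrow> Im3 x = Im3 y \<Longrightarrow> x = y"
  by (cases x; cases y) simp

lemma quat_eq_iff:
  "x = y \<longleftrightarrow> Re x = Re y \<and> Im1 x = Im1 y \<and> Im2 x = Im2 y \<and> Im3 x = Im3 y"
  by (auto intro: quat_eqI)

instantiation quat :: real_vector
begin
definition "0 = Quat 0 0 0 0"
definition "x + y = Quat (Re x + Re y) (Im1 x + Im1 y) (Im2 x + Im2 y) (Im3 x + Im3 y)"
definition "- x = Quat (- Re x) (- Im1 x) (- Im2 x) (- Im3 x)"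
definition "x - y = Quat (Re x - Re y) (Im1 x - Im1 y) (Im2 x - Im2 y) (Im3 x - Im3 y)"
definition "scaleR r x = Quat (r * Re x) (r * Im1 x) (r * Im2 x) (r * Im3 x)"
instance
  by standard (simp_all add: quat_eq_iff zero_quat_def plus_quat_def uminus_quat_def
      minus_quat_def scaleR_quat_def algebra_simps)
end

instantiation quat :: real_normed_vector
begin
definition "norm x = sqrt ((Re x)\<^sup>2 + (Im1 x)\<^sup>2 + (Im2 x)\<^sup>2 + (Im3 x)\<^sup>2)"
definition "sgn (x::quat) = x /\<^sub>R norm x"
definition "dist (x::quat) y = norm (x - y)"
definition "uniformity = (INF e\<in>{0<..}. principal {(x::quat, y). dist x y < e})"
definition "open (U :: quat set) \<longleftrightarrow> (\<forall>x\<in>U. \<forall>\<^sub>F (x', y) in uniformity. x' = x \<longrightarrow> y \<in> U)"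
instance
proof
  fix r :: real and x y :: quat and S :: "quat set"
  show "(norm x = 0) = (x = 0)"
    by (simp add: norm_quat_def quat_eq_iff zero_quat_def add_nonneg_eq_0_iff)
  have "sqrt ((Re x + Re y)\<^sup>2 + (Im1 x + Im1 y)\<^sup>2 + (Im2 x + Im2 y)\<^sup>2 + (Im3 x + Im3 y)\<^sup>2)
     \<le> sqrt ((Re x)\<^sup>2 + (Im1 x)\<^sup>2 + (Im2 x)\<^sup>2 + (Im3 x)\<^sup>2) + sqrt ((Re y)\<^sup>2 + (Im1 y)\<^sup>2 + (Im2 y)\<^sup>2 + (Im3 y)\<^sup>2)"
  proof -
    let ?u = "\<lambda>i::nat. [Re x, Im1 x, Im2 x, Im3 x] ! i"
    let ?v = "\<lambda>i::nat. [Re y, Im1 y, Im2 y, Im3 y] ! i"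
    have "L2_set (\<lambda>i. ?u i + ?v i) {0..<4} \<le> L2_set ?u {0..<4} + L2_set ?v {0..<4}"
      by (rule L2_set_triangle_ineq)
    thus ?thesis by (simp add: L2_set_def numeral_eq_Suc add.assoc)
  qed
  thus "norm (x + y) \<le> norm x + norm y"
    by (simp add: norm_quat_def plus_quat_def)
  show "norm (r *\<^sub>R x) = \<bar>r\<bar> * norm x"
    by (simp add: norm_quat_def scaleR_quat_def power_mult_distrib
        distrib_left [symmetric] real_sqrt_mult)
qed (simp_all add: sgn_quat_def dist_quat_def uniformity_quat_def open_quat_def)
end

instantiation quat :: ring_1
begin
definition "1 = Quat 1 0 0 0"
definition "x * y = Quat
   (Re x * Re y - Im1 x * Im1 y - Im2 x * Im2 y - Im3 x * Im3 y)
   (Re x * Im1 y + Im1 x * Re y + Im2 x * Im3 y - Im3 x * Im2 y)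
   (Re x * Im2 y - Im1 x * Im3 y + Im2 x * Re y + Im3 x * Im1 y)
   (Re x * Im3 y + Im1 x * Im2 y - Im2 x * Im1 y + Im3 x * Re y)"
instance
  by standard (simp_all add: quat_eq_iff one_quat_def times_quat_def zero_quat_def
      plus_quat_def algebra_simps)
end

instance quat :: real_algebra_1
  by standard (simp_all add: quat_eq_iff times_quat_def scaleR_quat_def algebra_simps)

definition qi :: quat where "qi = Quat 0 1 0 0"
definition qj :: quat where "qj = Quat 0 0 1 0"

definition imag_units :: "quat set" where
  "imag_units = {q. q * q = - 1}"

definition slice_pt :: "real \<Rightarrow> real \<Rightarrow> quat \<Rightarrow> quat" where
  "slice_pt x y I = of_real x + of_real y * I"

definition slice_plane :: "quat \<Rightarrow> quat set" where
  "slice_plane I = {slice_pt x y I | x y. True}"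

definition symmetric_slice_domain :: "quat set \<Rightarrow> bool" where
  "symmetric_slice_domain \<Omega> \<longleftrightarrow>
     open \<Omega> \<and> connected \<Omega> \<and>
     (\<exists>r::real. of_real r \<in> \<Omega>) \<and>
     (\<forall>I\<in>imag_units. openin (top_of_set (slice_plane I)) (\<Omega> \<inter> slice_plane I)
                        \<and> connected (\<Omega> \<inter> slice_plane I)) \<and>
     (\<forall>x y I J. I \<in> imag_units \<longrightarrow> J \<in> imag_units \<longrightarrow>
                 slice_pt x y I \<in> \<Omega> \<longrightarrow> slice_pt x y J \<in> \<Omega>)"

definition slice_regular :: "quat set \<Rightarrow> (quat \<Rightarrow> quat) \<Rightarrow> bool" where
  "slice_regular \<Omega> f \<longleftrightarrow>
     (\<forall>I\<in>imag_units.
        \<exists>D :: real \<times> real \<Rightarrow> real \<times> real \<Rightarrow> quat.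
          (\<forall>p\<in>{(x, y). slice_pt x y I \<in> \<Omega>}.
             ((\<lambda>(x, y). f (slice_pt x y I)) has_derivative D p) (at p)) \<and>
          continuous_on {(x, y). slice_pt x y I \<in> \<Omega>} (\<lambda>p. D p (1, 0)) \<and>
          continuous_on {(x, y). slice_pt x y I \<in> \<Omega>} (\<lambda>p. D p (0, 1)) \<and>
          (\<forall>p\<in>{(x, y). slice_pt x y I \<in> \<Omega>}. (1/2) *\<^sub>R (D p (1, 0) + I * D p (0, 1)) = 0))"

text \<open>A quaternion \<open>q\<close> is written as \<open>x + yJ\<close> with \<open>x = Re q\<close>, \<open>y = |Im q|\<close> and
  \<open>J = Im q / |Im q|\<close> (any \<open>J\<close>, here \<open>qi\<close>, if \<open>q\<close> is real; the formula does not depend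
  on the choice of representation).\<close>
definition im_part :: "quat \<Rightarrow> quat" where
  "im_part q = Quat 0 (Im1 q) (Im2 q) (Im3 q)"

definition reg_ext :: "quat \<Rightarrow> (quat \<Rightarrow> quat) \<Rightarrow> quat \<Rightarrow> quat" where
  "reg_ext I h q =
     (let x = Re q; y = norm (im_part q);
          J = (if y = 0 then qi else (1 / y) *\<^sub>R im_part q)
      in (1/2) *\<^sub>R (h (slice_pt x y I) + h (slice_pt x (- y) I))
         + (1/2) *\<^sub>R (J * I * (h (slice_pt x (- y) I) - h (slice_pt x y I))))"

text \<open>Regular conjugate, with the fixed choice \<open>I = i\<close>, \<open>J = j\<close>: on \<open>\<complex>\<^sub>i\<close> write
  \<open>f = F + G j\<close> with \<open>F, G\<close> \<open>\<complex>\<^sub>i\<close>-valued, i.e. for \<open>f(z) = a + b i + c j + d k\<close>,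
  \<open>F(z) = a + b i\<close>, \<open>G(z) = c + d i\<close>; then \<open>f^c = ext(conj(F(conj z)) - G(z) j)\<close>.\<close>
definition split_F :: "quat \<Rightarrow> quat" where
  "split_F q = Quat (Re q) (Im1 q) 0 0"
definition split_G :: "quat \<Rightarrow> quat" where
  "split_G q = Quat (Im2 q) (Im3 q) 0 0"
definition qcnj :: "quat \<Rightarrow> quat" where
  "qcnj q = Quat (Re q) (- Im1 q) (- Im2 q) (- Im3 q)"

definition reg_conj :: "(quat \<Rightarrow> quat) \<Rightarrow> quat \<Rightarrow> quat" where
  "reg_conj f = reg_ext qi (\<lambda>z. qcnj (split_F (f (qcnj z))) - split_G (f z) * qj)"

end

theory Submission
  imports Defs "HOL-Complex_Analysis.Conformal_Mappings"
begin

text \<open>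
  On a symmetric slice domain the representation formula writes \<open>f(x + yJ) = \<alpha> + J\<beta>\<close>, where
  \<open>\<alpha>, \<beta>\<close> depend only on \<open>(x, y)\<close> and are read off from the slice \<open>\<complex>\<^sub>i\<close>; unwinding the definition
  of the regular conjugate gives \<open>f\<^sup>c(x + yJ) = \<alpha>\<^sup>* + J\<beta>\<^sup>*\<close>, with \<open>\<^sup>*\<close> the quaternionic conjugate.
  The unit \<open>K = -\<beta>J\<beta>\<^sup>-\<^sup>1\<close> satisfies \<open>f(x + yK) = \<alpha> - \<beta>J = (f\<^sup>c(x + yJ))\<^sup>*\<close>. Hence \<open>f\<^sup>c\<close> is
  conjugation composed with \<open>f \<circ> \<sigma>\<close>, where \<open>\<sigma>\<close> is a bijection of \<open>\<Omega>\<^sub>1\<close> mapping each sphere \<open>x + y\<bbbS>\<close>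
  onto itself, and conjugation is a bijection of \<open>\<Omega>\<^sub>2\<close>: this gives the statements on images,
  bijectivity, suprema and infima. Regularity of \<open>f\<^sup>c\<close> holds because \<open>(\<alpha>, \<beta>)\<close> satisfy the
  Cauchy-Riemann system \<open>\<alpha>\<^sub>x = \<beta>\<^sub>y, \<alpha>\<^sub>y = -\<beta>\<^sub>x\<close>, which conjugation preserves.
\<close>

lemma quat_component_simps [simp]:
  "quat.Re 0 = 0" "Im1 0 = 0" "Im2 0 = 0" "Im3 0 = 0"
  "quat.Re 1 = 1" "Im1 1 = 0" "Im2 1 = 0" "Im3 1 = 0"
  "quat.Re (x + y) = quat.Re x + quat.Re y" "Im1 (x + y) = Im1 x + Im1 y"
  "Im2 (x + y) = Im2 x + Im2 y" "Im3 (x + y) = Im3 x + Im3 y"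
  "quat.Re (x - y) = quat.Re x - quat.Re y" "Im1 (x - y) = Im1 x - Im1 y"
  "Im2 (x - y) = Im2 x - Im2 y" "Im3 (x - y) = Im3 x - Im3 y"
  "quat.Re (- x) = - quat.Re x" "Im1 (- x) = - Im1 x" "Im2 (- x) = - Im2 x" "Im3 (- x) = - Im3 x"
  "quat.Re (r *\<^sub>R x) = r * quat.Re x" "Im1 (r *\<^sub>R x) = r * Im1 x"
  "Im2 (r *\<^sub>R x) = r * Im2 x" "Im3 (r *\<^sub>R x) = r * Im3 x"
  by (simp_all add: zero_quat_def one_quat_def plus_quat_def minus_quat_def uminus_quat_def
      scaleR_quat_def)

lemma quat_of_real: "of_real r = Quat r 0 0 0"
  by (simp add: of_real_def quat_eq_iff)

lemma norm_mult_quat: "norm (p * q :: quat) = norm p * norm q"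
proof -
  have "(quat.Re p * quat.Re q - Im1 p * Im1 q - Im2 p * Im2 q - Im3 p * Im3 q)\<^sup>2 +
      (quat.Re p * Im1 q + Im1 p * quat.Re q + Im2 p * Im3 q - Im3 p * Im2 q)\<^sup>2 +
      (quat.Re p * Im2 q - Im1 p * Im3 q + Im2 p * quat.Re q + Im3 p * Im1 q)\<^sup>2 +
      (quat.Re p * Im3 q + Im1 p * Im2 q - Im2 p * Im1 q + Im3 p * quat.Re q)\<^sup>2
    = ((quat.Re p)\<^sup>2 + (Im1 p)\<^sup>2 + (Im2 p)\<^sup>2 + (Im3 p)\<^sup>2)
      * ((quat.Re q)\<^sup>2 + (Im1 q)\<^sup>2 + (Im2 q)\<^sup>2 + (Im3 q)\<^sup>2)"
    by algebra
  then show ?thesis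
    by (simp add: norm_quat_def times_quat_def real_sqrt_mult [symmetric])
qed

lemma bounded_linear_quat_components:
  "bounded_linear quat.Re" "bounded_linear Im1" "bounded_linear Im2" "bounded_linear Im3"
  by (rule bounded_linear_intro [where K = 1]; simp add: norm_quat_def real_le_rsqrt)+

lemma bounded_linear_mult_left_quat: "bounded_linear (\<lambda>q. a * (q :: quat))"
  by (rule bounded_linear_intro [where K = "norm a"])
     (simp_all add: distrib_left norm_mult_quat mult.commute)

lemma imag_units_iff:
  "J \<in> imag_units \<longleftrightarrow> quat.Re J = 0 \<and> (Im1 J)\<^sup>2 + (Im2 J)\<^sup>2 + (Im3 J)\<^sup>2 = 1"
proof
  assume "J \<in> imag_units"
  then have sq: "quat.Re J * quat.Re J - Im1 J * Im1 J - Im2 J * Im2 J - Im3 J * Im3 J = -1"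
    and mixed: "quat.Re J * Im1 J = 0" "quat.Re J * Im2 J = 0" "quat.Re J * Im3 J = 0"
    by (auto simp: imag_units_def quat_eq_iff times_quat_def one_quat_def algebra_simps)
  have "quat.Re J = 0"
  proof (rule ccontr)
    assume "quat.Re J \<noteq> 0"
    with mixed sq have "quat.Re J * quat.Re J = -1" by simp
    then show False by (metis not_square_less_zero neg_less_0_iff_less zero_less_one)
  qed
  with sq show "quat.Re J = 0 \<and> (Im1 J)\<^sup>2 + (Im2 J)\<^sup>2 + (Im3 J)\<^sup>2 = 1"
    by (simp add: power2_eq_square)
next
  assume "quat.Re J = 0 \<and> (Im1 J)\<^sup>2 + (Im2 J)\<^sup>2 + (Im3 J)\<^sup>2 = 1"
  then show "J \<in> imag_units"
    by (auto simp: imag_units_def quat_eq_iff times_quat_def one_quat_def power2_eq_square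
        algebra_simps)
qed

lemma imag_unit_mult_self: "J \<in> imag_units \<Longrightarrow> J * (J * x) = - x"
  by (simp add: mult.assoc [symmetric] imag_units_def)

lemma norm_imag_unit: "J \<in> imag_units \<Longrightarrow> norm J = 1"
  by (simp add: imag_units_iff norm_quat_def)

lemma qi_imag_unit: "qi \<in> imag_units"
  by (simp add: imag_units_iff qi_def)

lemma uminus_imag_unit: "J \<in> imag_units \<Longrightarrow> - J \<in> imag_units"
  by (simp add: imag_units_def)

lemma qcnj_add: "qcnj (p + q) = qcnj p + qcnj q"
  and qcnj_diff: "qcnj (p - q) = qcnj p - qcnj q"
  and qcnj_minus: "qcnj (- p) = - qcnj p"
  and qcnj_scaleR: "qcnj (r *\<^sub>R p) = r *\<^sub>R qcnj p"
  and qcnj_mult: "qcnj (p * q) = qcnj q * qcnj p"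
  and qcnj_qcnj [simp]: "qcnj (qcnj p) = p"
  by (simp_all add: qcnj_def quat_eq_iff times_quat_def algebra_simps)

lemma qcnj_imag_unit: "J \<in> imag_units \<Longrightarrow> qcnj J = - J"
  by (simp add: qcnj_def imag_units_iff quat_eq_iff)

lemma mult_qcnj_self: "q * qcnj q = (norm q)\<^sup>2 *\<^sub>R 1" "qcnj q * q = (norm q)\<^sup>2 *\<^sub>R 1"
  by (simp_all add: qcnj_def times_quat_def norm_quat_def quat_eq_iff power2_eq_square)

lemma norm_qcnj: "norm (qcnj q) = norm q"
  by (simp add: qcnj_def norm_quat_def)

lemma bounded_linear_qcnj: "bounded_linear qcnj"
  by (rule bounded_linear_intro [where K = 1]) (simp_all add: qcnj_add qcnj_scaleR norm_qcnj)

lemma slice_pt_imag_unit: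
  "J \<in> imag_units \<Longrightarrow> slice_pt x y J = Quat x (y * Im1 J) (y * Im2 J) (y * Im3 J)"
  by (simp add: slice_pt_def quat_of_real times_quat_def imag_units_iff plus_quat_def)

lemma slice_pt_real: "slice_pt x 0 J = of_real x"
  by (simp add: slice_pt_def)

lemma slice_pt_uminus: "slice_pt x (- y) J = slice_pt x y (- J)"
  by (simp add: slice_pt_def)

lemma slice_pt_eq_scaleR: "slice_pt x y J = of_real x + y *\<^sub>R J"
  by (simp add: slice_pt_def scaleR_conv_of_real)

lemma Re_slice_pt: "J \<in> imag_units \<Longrightarrow> quat.Re (slice_pt x y J) = x"
  and im_part_slice_pt: "J \<in> imag_units \<Longrightarrow> im_part (slice_pt x y J) = y *\<^sub>R J"
  by (simp_all add: slice_pt_imag_unit im_part_def imag_units_iff quat_eq_iff)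

lemma norm_im_part_slice_pt: "J \<in> imag_units \<Longrightarrow> norm (im_part (slice_pt x y J)) = \<bar>y\<bar>"
  by (simp add: im_part_slice_pt norm_imag_unit)

lemma qcnj_slice_pt: "J \<in> imag_units \<Longrightarrow> qcnj (slice_pt x y J) = slice_pt x (- y) J"
  by (simp add: slice_pt_imag_unit qcnj_def)

lemma slice_pt_polar:
  obtains J where "J \<in> imag_units" "q = slice_pt (quat.Re q) (norm (im_part q)) J"
proof (cases "im_part q = 0")
  case True
  then have "q = slice_pt (quat.Re q) (norm (im_part q)) qi"
    by (simp add: slice_pt_imag_unit qi_imag_unit im_part_def quat_eq_iff zero_quat_def)
  with qi_imag_unit that show thesis by blast
next
  case False
  define y where "y = norm (im_part q)"
  define J where "J = (1 / y) *\<^sub>R im_part q"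
  have "y > 0" using False by (simp add: y_def)
  have y2: "y\<^sup>2 = (Im1 q)\<^sup>2 + (Im2 q)\<^sup>2 + (Im3 q)\<^sup>2"
    by (simp add: y_def norm_quat_def im_part_def)
  have "(Im1 J)\<^sup>2 + (Im2 J)\<^sup>2 + (Im3 J)\<^sup>2 = ((Im1 q)\<^sup>2 + (Im2 q)\<^sup>2 + (Im3 q)\<^sup>2) / y\<^sup>2"
    by (simp add: J_def im_part_def power_divide add_divide_distrib)
  also have "\<dots> = 1"
    using \<open>y > 0\<close> by (simp add: y2 [symmetric])
  finally have "J \<in> imag_units"
    by (simp add: imag_units_iff J_def im_part_def)
  moreover have "q = slice_pt (quat.Re q) y J"
    using \<open>y > 0\<close> \<open>J \<in> imag_units\<close>
    by (simp add: slice_pt_imag_unit J_def im_part_def quat_eq_iff)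
  ultimately show thesis using that by (simp add: y_def)
qed

lemma slice_pt_eqD:
  assumes "J \<in> imag_units" "J' \<in> imag_units" "y \<ge> 0" "y' \<ge> 0"
    and eq: "slice_pt x y J = slice_pt x' y' J'"
  shows "x = x'" "y = y'" "y \<noteq> 0 \<Longrightarrow> J = J'"
proof -
  show "x = x'" using eq by (metis Re_slice_pt assms(1,2))
  show "y = y'" using eq assms by (metis norm_im_part_slice_pt abs_of_nonneg)
  then show "J = J'" if "y \<noteq> 0"
    using eq that by (metis im_part_slice_pt assms(1,2) scaleR_cancel_left)
qed

definition slice_coords :: "quat set \<Rightarrow> quat \<Rightarrow> (real \<times> real) set" where
  "slice_coords \<Omega> I = {(x, y). slice_pt x y I \<in> \<Omega>}"

definition cnj_pt :: "real \<times> real \<Rightarrow> real \<times> real" where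
  "cnj_pt p = (fst p, - snd p)"

lemma cnj_pt_simps [simp]: "cnj_pt (x, y) = (x, - y)" "cnj_pt (cnj_pt p) = p"
  by (simp_all add: cnj_pt_def)

lemma bounded_linear_cnj_pt: "bounded_linear cnj_pt"
  unfolding cnj_pt_def
  by (intro bounded_linear_Pair bounded_linear_fst bounded_linear_minus bounded_linear_snd)

lemma symmetric_slice_domain_sphere:
  "symmetric_slice_domain \<Omega> \<Longrightarrow> I \<in> imag_units \<Longrightarrow> J \<in> imag_units \<Longrightarrow>
    slice_pt x y I \<in> \<Omega> \<Longrightarrow> slice_pt x y J \<in> \<Omega>"
  unfolding symmetric_slice_domain_def by blast

lemma slice_coords_symmetric:
  assumes "symmetric_slice_domain \<Omega>" "I \<in> imag_units"
  shows "slice_coords \<Omega> I = slice_coords \<Omega> qi"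
  using symmetric_slice_domain_sphere [OF assms(1) assms(2) qi_imag_unit]
    symmetric_slice_domain_sphere [OF assms(1) qi_imag_unit assms(2)]
  unfolding slice_coords_def by blast

lemma cnj_pt_slice_coords:
  assumes "symmetric_slice_domain \<Omega>" "p \<in> slice_coords \<Omega> qi"
  shows "cnj_pt p \<in> slice_coords \<Omega> qi"
proof (cases p)
  case (Pair x y)
  with assms(2) have "slice_pt x y qi \<in> \<Omega>" by (simp add: slice_coords_def)
  then have "slice_pt x y (- qi) \<in> \<Omega>"
    by (rule symmetric_slice_domain_sphere [OF assms(1) qi_imag_unit uminus_imag_unit [OF qi_imag_unit]])
  with Pair show ?thesis by (simp add: slice_coords_def slice_pt_uminus)
qed

lemma qcnj_symmetric_slice_domain:
  assumes "symmetric_slice_domain \<Omega>" "q \<in> \<Omega>"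
  shows "qcnj q \<in> \<Omega>"
proof -
  obtain J where J: "J \<in> imag_units" "q = slice_pt (quat.Re q) (norm (im_part q)) J"
    by (rule slice_pt_polar)
  then have "qcnj q = slice_pt (quat.Re q) (norm (im_part q)) (- J)"
    by (metis qcnj_slice_pt slice_pt_uminus)
  then show ?thesis
    using symmetric_slice_domain_sphere [OF assms(1) J(1) uminus_imag_unit [OF J(1)]] J assms(2)
    by metis
qed

lemma open_slice_coords: "open \<Omega> \<Longrightarrow> open (slice_coords \<Omega> I)"
proof -
  assume "open \<Omega>"
  have "continuous_on UNIV (\<lambda>p. slice_pt (fst p) (snd p) I)"
    unfolding slice_pt_eq_scaleR by (intro continuous_intros)
  from open_vimage [OF \<open>open \<Omega>\<close> this] show ?thesis
    by (simp add: slice_coords_def vimage_def case_prod_unfold)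
qed

lemma connected_slice_coords:
  assumes "symmetric_slice_domain \<Omega>"
  shows "connected (slice_coords \<Omega> qi)"
proof -
  have coords: "(quat.Re (slice_pt x y qi), Im1 (slice_pt x y qi)) = (x, y)" for x y
    by (simp add: slice_pt_def quat_of_real times_quat_def plus_quat_def qi_def)
  have "slice_coords \<Omega> qi = (\<lambda>q. (quat.Re q, Im1 q)) ` (\<Omega> \<inter> slice_plane qi)"
  proof (intro equalityI subsetI)
    fix p assume "p \<in> slice_coords \<Omega> qi"
    then show "p \<in> (\<lambda>q. (quat.Re q, Im1 q)) ` (\<Omega> \<inter> slice_plane qi)"
      unfolding slice_coords_def slice_plane_def using coords by (cases p) (auto intro!: image_eqI)
  next
    fix p assume "p \<in> (\<lambda>q. (quat.Re q, Im1 q)) ` (\<Omega> \<inter> slice_plane qi)"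
    then show "p \<in> slice_coords \<Omega> qi"
      unfolding slice_coords_def slice_plane_def using coords by auto
  qed
  moreover have "continuous_on UNIV (\<lambda>q. (quat.Re q, Im1 q))"
    using bounded_linear_quat_components
    by (intro continuous_intros linear_continuous_on)
  moreover have "connected (\<Omega> \<inter> slice_plane qi)"
    using assms qi_imag_unit by (simp add: symmetric_slice_domain_def)
  ultimately show ?thesis
    by (metis connected_continuous_image continuous_on_subset subset_UNIV)
qed

lemma real_slice_coords:
  assumes "symmetric_slice_domain \<Omega>"
  obtains r where "(r, 0) \<in> slice_coords \<Omega> qi"
  using assms by (auto simp: symmetric_slice_domain_def slice_coords_def slice_pt_real)

section \<open>The identity principle on a slice\<close>

lemma linear_pair_expand:
  assumes "linear L"
  shows "L (a, b) = a *\<^sub>R L (1, 0) + b *\<^sub>R L (0, 1)"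
proof -
  have "(a, b) = a *\<^sub>R (1, 0) + b *\<^sub>R ((0, 1) :: real \<times> real)" by simp
  then show ?thesis by (metis assms linear_add linear_scale)
qed

text \<open>For a real functional \<open>c\<close>, the pair \<open>(c d, -c(J d))\<close> satisfies the classical
  Cauchy-Riemann equations; this reduces the identity principle to the complex one.\<close>

lemma cr_functional_has_field_derivative:
  fixes c :: "quat \<Rightarrow> real"
  assumes c: "bounded_linear c" and J: "J \<in> imag_units"
    and d: "(d has_derivative D) (at (Complex.Re z, Complex.Im z))"
    and cr: "D (1, 0) + J * D (0, 1) = 0"
  shows "((\<lambda>z. Complex (c (d (Complex.Re z, Complex.Im z))) (- c (J * d (Complex.Re z, Complex.Im z))))
          has_field_derivative Complex (c (D (1, 0))) (- c (J * D (1, 0)))) (at z)"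
proof -
  define M where "M q = Complex (c q) (- c (J * q))" for q
  have "bounded_linear M"
  proof -
    have "M = (\<lambda>q. complex_of_real (c q) + \<i> * complex_of_real (- c (J * q)))"
      by (simp add: M_def fun_eq_iff Complex_eq)
    then show ?thesis
      by (metis bounded_linear_add bounded_linear_compose bounded_linear_of_real
          bounded_linear_mult_right bounded_linear_minus c bounded_linear_mult_left_quat)
  qed
  have coords: "bounded_linear (\<lambda>z::complex. (Complex.Re z, Complex.Im z))"
    by (intro bounded_linear_Pair bounded_linear_Re bounded_linear_Im)
  have der: "((\<lambda>z. M (d (Complex.Re z, Complex.Im z))) has_derivative
      (\<lambda>h. M (D (Complex.Re h, Complex.Im h)))) (at z)"
    by (intro bounded_linear.has_derivative [OF \<open>bounded_linear M\<close>]
        has_derivative_compose [OF bounded_linear_imp_has_derivative [OF coords] d])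
  have "linear D" and "linear c"
    using has_derivative_linear [OF d] c bounded_linear.linear by blast+
  have D01: "D (0, 1) = J * D (1, 0)"
    using cr imag_unit_mult_self [OF J, of "D (0, 1)"]
    by (metis add.inverse_inverse eq_neg_iff_add_eq_0 mult_minus_right)
  have "M (D (Complex.Re h, Complex.Im h)) = M (D (1, 0)) * h" for h
  proof -
    define u where "u = D (1, 0)"
    have "D (Complex.Re h, Complex.Im h) = Complex.Re h *\<^sub>R u + Complex.Im h *\<^sub>R (J * u)"
      using linear_pair_expand [OF \<open>linear D\<close>, of "Complex.Re h" "Complex.Im h"]
      by (simp add: D01 u_def)
    moreover have "J * (Complex.Re h *\<^sub>R u + Complex.Im h *\<^sub>R (J * u))
        = Complex.Re h *\<^sub>R (J * u) - Complex.Im h *\<^sub>R u"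
      by (simp add: distrib_left imag_unit_mult_self [OF J])
    ultimately show ?thesis
      by (simp add: M_def u_def linear_add [OF \<open>linear c\<close>] linear_diff [OF \<open>linear c\<close>]
          linear_scale [OF \<open>linear c\<close>] imag_unit_mult_self [OF J] complex_eq_iff algebra_simps)
  qed
  with der show ?thesis
    by (simp add: has_field_derivative_def M_def)
qed

lemma open_complex_coords:
  "open U \<Longrightarrow> open ((\<lambda>z. (Complex.Re z, Complex.Im z)) -` U)"
  by (erule open_vimage) (intro continuous_intros)

lemma connected_complex_coords:
  fixes U :: "(real \<times> real) set"
  assumes "connected U"
  shows "connected ((\<lambda>z. (Complex.Re z, Complex.Im z)) -` U)"
proof -
  have "(\<lambda>z. (Complex.Re z, Complex.Im z)) -` U = (\<lambda>p. Complex (fst p) (snd p)) ` U"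
  proof (intro equalityI subsetI)
    fix z assume "z \<in> (\<lambda>z. (Complex.Re z, Complex.Im z)) -` U"
    then show "z \<in> (\<lambda>p. Complex (fst p) (snd p)) ` U"
      by (intro image_eqI [of _ _ "(Complex.Re z, Complex.Im z)"]) simp_all
  qed auto
  moreover have "continuous_on U (\<lambda>p. Complex (fst p) (snd p))"
    by (intro continuous_intros)
  ultimately show ?thesis
    using assms connected_continuous_image by metis
qed

lemma real_islimpt_complex_coords:
  fixes U :: "(real \<times> real) set"
  assumes "open U" "(r, 0) \<in> U"
  shows "complex_of_real r islimpt range of_real \<inter> (\<lambda>z. (Complex.Re z, Complex.Im z)) -` U"
proof (rule islimpt_Int_eventually)
  have "\<forall>\<^sub>F t in at r. complex_of_real t \<noteq> complex_of_real r"
    by (simp add: eventually_at_filter)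
  then show "complex_of_real r islimpt range of_real"
    by (intro islimpt_isCont_image islimpt_UNIV continuous_intros)
  show "\<forall>\<^sub>F z in at (complex_of_real r). z \<in> (\<lambda>z. (Complex.Re z, Complex.Im z)) -` U"
    using open_complex_coords [OF \<open>open U\<close>] assms
    by (intro eventually_at_in_open') simp_all
qed

lemma cr_identity_principle:
  fixes d :: "real \<times> real \<Rightarrow> quat"
  assumes J: "J \<in> imag_units" and "open U" "connected U" "(r, 0) \<in> U"
    and real_zero: "\<And>x. (x, 0) \<in> U \<Longrightarrow> d (x, 0) = 0"
    and der: "\<And>p. p \<in> U \<Longrightarrow> (d has_derivative D p) (at p)"
    and cr: "\<And>p. p \<in> U \<Longrightarrow> D p (1, 0) + J * D p (0, 1) = 0"
    and "p \<in> U"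
  shows "d p = 0"
proof -
  define S where "S = (\<lambda>z. (Complex.Re z, Complex.Im z)) -` U"
  have "c (d p) = 0" if c: "bounded_linear c" for c :: "quat \<Rightarrow> real"
  proof -
    define \<phi> where
      "\<phi> z = Complex (c (d (Complex.Re z, Complex.Im z))) (- c (J * d (Complex.Re z, Complex.Im z)))"
      for z
    have holo: "\<phi> holomorphic_on S"
      unfolding holomorphic_on_def
    proof
      fix z assume "z \<in> S"
      with der cr have "\<phi> field_differentiable (at z)"
        unfolding \<phi>_def field_differentiable_def S_def
        by (blast intro: cr_functional_has_field_derivative [OF c J])
      then show "\<phi> field_differentiable (at z within S)"
        by (rule field_differentiable_at_within)
    qed
    have zero: "\<phi> z = 0" if "z \<in> range of_real \<inter> S" for z
    proof -
      from that obtain t where "z = of_real t" "(t, 0) \<in> U"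
        by (auto simp: S_def)
      then show ?thesis
        using real_zero linear_0 [OF bounded_linear.linear [OF c]]
        by (simp add: \<phi>_def complex_eq_iff)
    qed
    have "\<phi> (Complex (fst p) (snd p)) = 0"
    proof (rule analytic_continuation [OF holo _ _ _ _ _ zero])
      show "open S"
        unfolding S_def using \<open>open U\<close> by (rule open_complex_coords)
      show "connected S"
        unfolding S_def using \<open>connected U\<close> by (rule connected_complex_coords)
      show "of_real r islimpt range of_real \<inter> S"
        unfolding S_def using \<open>open U\<close> \<open>(r, 0) \<in> U\<close> by (rule real_islimpt_complex_coords)
      show "range of_real \<inter> S \<subseteq> S" "complex_of_real r \<in> S" "Complex (fst p) (snd p) \<in> S"
        using \<open>(r, 0) \<in> U\<close> \<open>p \<in> U\<close> by (auto simp: S_def)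
    qed
    then show ?thesis
      by (simp add: \<phi>_def complex_eq_iff)
  qed
  from this [OF bounded_linear_quat_components(1)] this [OF bounded_linear_quat_components(2)]
    this [OF bounded_linear_quat_components(3)] this [OF bounded_linear_quat_components(4)]
  show ?thesis
    by (simp add: quat_eq_iff)
qed

section \<open>The representation formula\<close>

definition C1_derivative_on ::
  "(real \<times> real) set \<Rightarrow> (real \<times> real \<Rightarrow> quat) \<Rightarrow> (real \<times> real \<Rightarrow> real \<times> real \<Rightarrow> quat) \<Rightarrow> bool"
where
  "C1_derivative_on U g D \<longleftrightarrow>
     (\<forall>p\<in>U. (g has_derivative D p) (at p)) \<and>
     continuous_on U (\<lambda>p. D p (1, 0)) \<and> continuous_on U (\<lambda>p. D p (0, 1))"

definition cr_holomorphic_on :: "quat \<Rightarrow> (real \<times> real) set \<Rightarrow> (real \<times> real \<Rightarrow> quat) \<Rightarrow> bool" where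
  "cr_holomorphic_on J U g \<longleftrightarrow>
     (\<exists>D. C1_derivative_on U g D \<and> (\<forall>p\<in>U. D p (1, 0) + J * D p (0, 1) = 0))"

definition slice_fun :: "(quat \<Rightarrow> quat) \<Rightarrow> quat \<Rightarrow> real \<times> real \<Rightarrow> quat" where
  "slice_fun f I = (\<lambda>(x, y). f (slice_pt x y I))"

lemma slice_fun_apply [simp]: "slice_fun f I (x, y) = f (slice_pt x y I)"
  by (simp add: slice_fun_def)

lemma slice_regular_iff:
  "slice_regular \<Omega> f \<longleftrightarrow>
     (\<forall>I\<in>imag_units. cr_holomorphic_on I (slice_coords \<Omega> I) (slice_fun f I))"
  by (simp add: slice_regular_def cr_holomorphic_on_def C1_derivative_on_def slice_coords_def
      slice_fun_def)

lemma C1_derivative_on_linear: "C1_derivative_on U g D \<Longrightarrow> p \<in> U \<Longrightarrow> linear (D p)"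
  by (auto simp: C1_derivative_on_def intro: has_derivative_linear)

lemma C1_derivative_on_bounded_linear:
  assumes "C1_derivative_on U g D" "bounded_linear T"
  shows "C1_derivative_on U (\<lambda>p. T (g p)) (\<lambda>p v. T (D p v))"
proof -
  have "continuous_on U (\<lambda>p. T (h p))" if "continuous_on U h" for h
    by (rule continuous_on_compose2 [OF linear_continuous_on [OF assms(2)] that subset_UNIV])
  with assms show ?thesis
    unfolding C1_derivative_on_def by (simp add: bounded_linear.has_derivative)
qed

lemma C1_derivative_on_add:
  "C1_derivative_on U g D \<Longrightarrow> C1_derivative_on U h E \<Longrightarrow>
    C1_derivative_on U (\<lambda>p. g p + h p) (\<lambda>p v. D p v + E p v)"
  and C1_derivative_on_diff:
  "C1_derivative_on U g D \<Longrightarrow> C1_derivative_on U h E \<Longrightarrow>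
    C1_derivative_on U (\<lambda>p. g p - h p) (\<lambda>p v. D p v - E p v)"
  unfolding C1_derivative_on_def by (auto intro!: derivative_intros continuous_intros)

lemma C1_derivative_on_cnj_pt:
  assumes C1: "C1_derivative_on U g D" and U: "\<And>p. p \<in> U \<Longrightarrow> cnj_pt p \<in> U"
  shows "C1_derivative_on U (\<lambda>p. g (cnj_pt p)) (\<lambda>p v. D (cnj_pt p) (cnj_pt v))"
proof -
  have der: "(g has_derivative D p) (at p)" if "p \<in> U" for p
    using C1 that by (simp add: C1_derivative_on_def)
  have cont: "continuous_on U (\<lambda>p. h (cnj_pt p))" if "continuous_on U h" for h
    using continuous_on_compose2 [OF that linear_continuous_on [OF bounded_linear_cnj_pt]] U
    by blast
  have "D (cnj_pt p) (0, - 1) = - D (cnj_pt p) (0, 1)" if "p \<in> U" for p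
    using linear_neg [OF C1_derivative_on_linear [OF C1 U [OF that]], of "(0, 1)"] by simp
  moreover have "continuous_on U (\<lambda>p. - D (cnj_pt p) (0, 1))"
    using C1 by (auto simp: C1_derivative_on_def intro!: cont continuous_on_minus)
  ultimately have "continuous_on U (\<lambda>p. D (cnj_pt p) (cnj_pt (0, 1)))"
    by (auto elim!: continuous_on_eq)
  moreover have "((\<lambda>p. g (cnj_pt p)) has_derivative (\<lambda>v. D (cnj_pt p) (cnj_pt v))) (at p)"
    if "p \<in> U" for p
    by (rule has_derivative_compose [OF bounded_linear_imp_has_derivative [OF bounded_linear_cnj_pt]
          der [OF U [OF that]]])
  moreover have "continuous_on U (\<lambda>p. D (cnj_pt p) (1, 0))"
    using C1 by (auto simp: C1_derivative_on_def intro: cont)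
  ultimately show ?thesis
    by (simp add: C1_derivative_on_def)
qed

lemma cr_holomorphic_on_pair:
  assumes A: "C1_derivative_on U A DA" and B: "C1_derivative_on U B DB" and J: "J \<in> imag_units"
    and cr: "\<And>p. p \<in> U \<Longrightarrow> DA p (1, 0) = DB p (0, 1) \<and> DA p (0, 1) = - DB p (1, 0)"
  shows "cr_holomorphic_on J U (\<lambda>p. A p + J * B p)"
  unfolding cr_holomorphic_on_def
proof (intro exI conjI ballI)
  show "C1_derivative_on U (\<lambda>p. A p + J * B p) (\<lambda>p v. DA p v + J * DB p v)"
    by (intro C1_derivative_on_add A C1_derivative_on_bounded_linear [OF B]
        bounded_linear_mult_left_quat)
  show "DA p (1, 0) + J * DB p (1, 0) + J * (DA p (0, 1) + J * DB p (0, 1)) = 0" if "p \<in> U" for p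
    using cr [OF that] by (simp add: distrib_left right_diff_distrib imag_unit_mult_self [OF J])
qed

lemma cr_holomorphic_on_diff:
  assumes "cr_holomorphic_on J U g" "cr_holomorphic_on J U h"
  shows "cr_holomorphic_on J U (\<lambda>p. g p - h p)"
proof -
  obtain D E where "C1_derivative_on U g D" "C1_derivative_on U h E"
    and crD: "\<forall>p\<in>U. D p (1, 0) + J * D p (0, 1) = 0"
    and crE: "\<forall>p\<in>U. E p (1, 0) + J * E p (0, 1) = 0"
    using assms by (auto simp: cr_holomorphic_on_def)
  show ?thesis
    unfolding cr_holomorphic_on_def
  proof (intro exI conjI ballI)
    show "C1_derivative_on U (\<lambda>p. g p - h p) (\<lambda>p v. D p v - E p v)"
      by (rule C1_derivative_on_diff) fact+
    fix p assume "p \<in> U"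
    have "D p (1, 0) - E p (1, 0) + J * (D p (0, 1) - E p (0, 1))
        = (D p (1, 0) + J * D p (0, 1)) - (E p (1, 0) + J * E p (0, 1))"
      by (simp add: algebra_simps)
    also have "\<dots> = 0"
      using crD crE \<open>p \<in> U\<close> by simp
    finally show "D p (1, 0) - E p (1, 0) + J * (D p (0, 1) - E p (0, 1)) = 0" .
  qed
qed

definition stem1 :: "(quat \<Rightarrow> quat) \<Rightarrow> real \<times> real \<Rightarrow> quat" where
  "stem1 f p = (1/2) *\<^sub>R (slice_fun f qi p + slice_fun f qi (cnj_pt p))"

definition stem2 :: "(quat \<Rightarrow> quat) \<Rightarrow> real \<times> real \<Rightarrow> quat" where
  "stem2 f p = (1/2) *\<^sub>R (qi * (slice_fun f qi (cnj_pt p) - slice_fun f qi p))"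

lemma stem1_real: "stem1 f (x, 0) = f (of_real x)"
  and stem2_real: "stem2 f (x, 0) = 0"
  by (simp_all add: stem1_def stem2_def slice_pt_real scaleR_add_right [symmetric])

lemma stem2_cnj_pt: "stem2 f (cnj_pt p) = - stem2 f p"
  by (simp add: stem2_def right_diff_distrib scaleR_right_diff_distrib)

lemma stems_cr_system:
  assumes ssd: "symmetric_slice_domain \<Omega>" and reg: "slice_regular \<Omega> f"
  obtains DA DB where
    "C1_derivative_on (slice_coords \<Omega> qi) (stem1 f) DA"
    "C1_derivative_on (slice_coords \<Omega> qi) (stem2 f) DB"
    "\<And>p. p \<in> slice_coords \<Omega> qi \<Longrightarrow> DA p (1, 0) = DB p (0, 1) \<and> DA p (0, 1) = - DB p (1, 0)"
proof -
  define U where "U = slice_coords \<Omega> qi"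
  define k where "k = slice_fun f qi"
  obtain D where C1: "C1_derivative_on U k D"
    and cr: "\<And>p. p \<in> U \<Longrightarrow> D p (1, 0) = - (qi * D p (0, 1))"
    using reg qi_imag_unit
    by (auto simp: slice_regular_iff cr_holomorphic_on_def U_def k_def eq_neg_iff_add_eq_0)
  have C1_cnj: "C1_derivative_on U (\<lambda>p. k (cnj_pt p)) (\<lambda>p v. D (cnj_pt p) (cnj_pt v))"
    using C1 cnj_pt_slice_coords [OF ssd] by (simp add: C1_derivative_on_cnj_pt U_def)
  define DA where "DA p v = (1/2) *\<^sub>R (D p v + D (cnj_pt p) (cnj_pt v))" for p v
  define DB where "DB p v = (1/2) *\<^sub>R (qi * (D (cnj_pt p) (cnj_pt v) - D p v))" for p v
  show thesis
  proof
    show "C1_derivative_on (slice_coords \<Omega> qi) (stem1 f) DA"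
      using C1_derivative_on_bounded_linear [OF C1_derivative_on_add [OF C1 C1_cnj]
          bounded_linear_scaleR_right]
      unfolding stem1_def [abs_def] DA_def [abs_def] by (simp add: U_def k_def)
    show "C1_derivative_on (slice_coords \<Omega> qi) (stem2 f) DB"
      using C1_derivative_on_bounded_linear [OF C1_derivative_on_bounded_linear
          [OF C1_derivative_on_diff [OF C1_cnj C1] bounded_linear_mult_left_quat]
          bounded_linear_scaleR_right]
      unfolding stem2_def [abs_def] DB_def [abs_def] by (simp add: U_def k_def)
  next
    fix p assume "p \<in> slice_coords \<Omega> qi"
    then have p: "p \<in> U" "cnj_pt p \<in> U"
      using cnj_pt_slice_coords [OF ssd] by (simp_all add: U_def)
    have "D (cnj_pt p) (0, - 1) = - D (cnj_pt p) (0, 1)"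
      using linear_neg [OF C1_derivative_on_linear [OF C1 p(2)], of "(0, 1)"] by simp
    with cr [OF p(1)] cr [OF p(2)]
    show "DA p (1, 0) = DB p (0, 1) \<and> DA p (0, 1) = - DB p (1, 0)"
      by (simp add: DA_def DB_def algebra_simps imag_unit_mult_self [OF qi_imag_unit])
  qed
qed

lemma cr_holomorphic_on_stems:
  assumes "symmetric_slice_domain \<Omega>" "slice_regular \<Omega> f" "J \<in> imag_units"
  shows "cr_holomorphic_on J (slice_coords \<Omega> qi) (\<lambda>p. stem1 f p + J * stem2 f p)"
proof -
  obtain DA DB where
    "C1_derivative_on (slice_coords \<Omega> qi) (stem1 f) DA"
    "C1_derivative_on (slice_coords \<Omega> qi) (stem2 f) DB"
    "\<And>p. p \<in> slice_coords \<Omega> qi \<Longrightarrow> DA p (1, 0) = DB p (0, 1) \<and> DA p (0, 1) = - DB p (1, 0)"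
    using stems_cr_system [OF assms(1,2)] by blast
  then show ?thesis
    by (rule cr_holomorphic_on_pair [OF _ _ assms(3)])
qed

theorem slice_regular_representation:
  assumes ssd: "symmetric_slice_domain \<Omega>" and reg: "slice_regular \<Omega> f"
    and J: "J \<in> imag_units" and xy: "slice_pt x y J \<in> \<Omega>"
  shows "f (slice_pt x y J) = stem1 f (x, y) + J * stem2 f (x, y)"
proof -
  define U where "U = slice_coords \<Omega> qi"
  define d where "d p = slice_fun f J p - (stem1 f p + J * stem2 f p)" for p
  have "cr_holomorphic_on J (slice_coords \<Omega> J) (slice_fun f J)"
    using reg J by (simp add: slice_regular_iff)
  then have "cr_holomorphic_on J U (slice_fun f J)"
    by (simp add: U_def slice_coords_symmetric [OF ssd J])
  then have "cr_holomorphic_on J U d"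
    unfolding d_def U_def by (rule cr_holomorphic_on_diff [OF _ cr_holomorphic_on_stems [OF ssd reg J]])
  then obtain D where der: "\<And>p. p \<in> U \<Longrightarrow> (d has_derivative D p) (at p)"
    and cr: "\<And>p. p \<in> U \<Longrightarrow> D p (1, 0) + J * D p (0, 1) = 0"
    by (auto simp: cr_holomorphic_on_def C1_derivative_on_def)
  obtain r where r: "(r, 0) \<in> U"
    using real_slice_coords [OF ssd] U_def by blast
  have "(x, y) \<in> slice_coords \<Omega> J"
    using xy by (simp add: slice_coords_def)
  then have "(x, y) \<in> U"
    by (simp add: U_def slice_coords_symmetric [OF ssd J])
  moreover have "open U"
    using ssd open_slice_coords unfolding U_def symmetric_slice_domain_def by blast
  moreover have "connected U"
    using connected_slice_coords [OF ssd] by (simp add: U_def)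
  moreover have "d (t, 0) = 0" for t
    by (simp add: d_def stem1_real stem2_real slice_pt_real)
  ultimately have "d (x, y) = 0"
    using cr_identity_principle [OF J _ _ r _ der cr] by blast
  then show ?thesis by (simp add: d_def)
qed

section \<open>The regular conjugate\<close>

lemma reg_ext_slice_pt:
  assumes J: "J \<in> imag_units"
  shows "reg_ext I h (slice_pt x y J) =
     (1/2) *\<^sub>R (h (slice_pt x y I) + h (slice_pt x (- y) I))
     + (1/2) *\<^sub>R (J * I * (h (slice_pt x (- y) I) - h (slice_pt x y I)))"
proof -
  note simps = reg_ext_def Let_def Re_slice_pt [OF J] im_part_slice_pt [OF J] norm_imag_unit [OF J]
  consider "y > 0" | "y < 0" | "y = 0" by linarith
  then show ?thesis
  proof cases
    case 2
    have "(- J) * I * (a - b) = J * I * (b - a)" for a b :: quat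
      by (simp add: algebra_simps)
    with 2 show ?thesis by (simp add: simps add.commute)
  qed (simp_all add: simps scaleR_add_right [symmetric])
qed

lemma reg_conj_slice_pt:
  assumes J: "J \<in> imag_units"
  shows "reg_conj f (slice_pt x y J) = qcnj (stem1 f (x, y)) + J * qcnj (stem2 f (x, y))"
proof -
  define F1 where "F1 = f (slice_pt x y qi)"
  define F2 where "F2 = f (slice_pt x (- y) qi)"
  define h where "h z = qcnj (split_F (f (qcnj z))) - split_G (f z) * qj" for z
  have h1: "h (slice_pt x y qi) = qcnj (split_F F2) - split_G F1 * qj"
    and h2: "h (slice_pt x (- y) qi) = qcnj (split_F F1) - split_G F2 * qj"
    by (simp_all add: h_def F1_def F2_def qcnj_slice_pt [OF qi_imag_unit])
  have "(1/2) *\<^sub>R (h (slice_pt x y qi) + h (slice_pt x (- y) qi)) = qcnj (stem1 f (x, y))"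
    unfolding h1 h2 by (simp add: stem1_def F1_def F2_def quat_eq_iff qcnj_def split_F_def
        split_G_def qj_def times_quat_def algebra_simps)
  moreover have "qi * (h (slice_pt x (- y) qi) - h (slice_pt x y qi)) = qcnj (qi * (F2 - F1))"
    unfolding h1 h2 by (simp add: quat_eq_iff qcnj_def split_F_def split_G_def qi_def qj_def
        times_quat_def algebra_simps)
  then have "(1/2) *\<^sub>R (J * qi * (h (slice_pt x (- y) qi) - h (slice_pt x y qi)))
      = J * qcnj (stem2 f (x, y))"
    by (simp add: stem2_def F1_def F2_def qcnj_scaleR mult.assoc)
  ultimately show ?thesis
    by (simp add: reg_conj_def reg_ext_slice_pt [OF J] h_def [abs_def])
qed

lemma slice_regular_reg_conj:
  assumes ssd: "symmetric_slice_domain \<Omega>" and reg: "slice_regular \<Omega> f"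
  shows "slice_regular \<Omega> (reg_conj f)"
  unfolding slice_regular_iff
proof
  fix J assume J: "J \<in> imag_units"
  obtain DA DB where
    A: "C1_derivative_on (slice_coords \<Omega> qi) (stem1 f) DA" and
    B: "C1_derivative_on (slice_coords \<Omega> qi) (stem2 f) DB" and
    cr: "\<And>p. p \<in> slice_coords \<Omega> qi \<Longrightarrow> DA p (1, 0) = DB p (0, 1) \<and> DA p (0, 1) = - DB p (1, 0)"
    using stems_cr_system [OF ssd reg] by blast
  have "cr_holomorphic_on J (slice_coords \<Omega> qi) (\<lambda>p. qcnj (stem1 f p) + J * qcnj (stem2 f p))"
    using cr
    by (intro cr_holomorphic_on_pair [OF C1_derivative_on_bounded_linear [OF A bounded_linear_qcnj]
          C1_derivative_on_bounded_linear [OF B bounded_linear_qcnj] J])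
      (simp add: qcnj_minus)
  moreover have "slice_fun (reg_conj f) J = (\<lambda>p. qcnj (stem1 f p) + J * qcnj (stem2 f p))"
    by (simp add: fun_eq_iff reg_conj_slice_pt [OF J])
  ultimately show "cr_holomorphic_on J (slice_coords \<Omega> J) (slice_fun (reg_conj f) J)"
    by (simp add: slice_coords_symmetric [OF ssd J])
qed

section \<open>Rotations of \<open>\<bbbS>\<close>\<close>

text \<open>For \<open>b \<noteq> 0\<close>, \<open>sphere_rot b v = -b v b\<^sup>-\<^sup>1\<close>; thus \<open>K = sphere_rot \<beta> J\<close> in the proof idea.\<close>

definition sphere_rot :: "quat \<Rightarrow> quat \<Rightarrow> quat" where
  "sphere_rot b v = (if b = 0 then v else - ((1 / (norm b)\<^sup>2) *\<^sub>R (b * v * qcnj b)))"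

lemma sphere_rot_mult: "sphere_rot b v * b = - (b * v)"
  by (cases "b = 0") (simp_all add: sphere_rot_def mult.assoc mult_qcnj_self)

lemma sphere_rot_sphere_rot_qcnj: "sphere_rot b (sphere_rot (qcnj b) v) = v"
proof (cases "b = 0")
  case False
  then have "qcnj b \<noteq> 0" by (metis norm_qcnj norm_eq_zero)
  moreover have "b * (qcnj b * v) = (norm b)\<^sup>2 *\<^sub>R v"
    by (simp add: mult.assoc [symmetric] mult_qcnj_self)
  ultimately show ?thesis
    using False by (simp add: sphere_rot_def norm_qcnj mult.assoc mult_qcnj_self)
qed (simp add: sphere_rot_def qcnj_def zero_quat_def)

lemma sphere_rot_qcnj_sphere_rot: "sphere_rot (qcnj b) (sphere_rot b v) = v"
  using sphere_rot_sphere_rot_qcnj [of "qcnj b"] by simp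

lemma sphere_rot_scaleR: "sphere_rot b (r *\<^sub>R v) = r *\<^sub>R sphere_rot b v"
  by (simp add: sphere_rot_def)

lemma sphere_rot_uminus: "sphere_rot (- b) = sphere_rot b"
  by (simp add: fun_eq_iff sphere_rot_def qcnj_minus)

lemma sphere_rot_imag_unit:
  assumes J: "J \<in> imag_units"
  shows "sphere_rot b J \<in> imag_units"
proof (cases "b = 0")
  case False
  have "(b * J * qcnj b) * (b * J * qcnj b) = b * J * ((qcnj b * b) * (J * qcnj b))"
    by (simp add: mult.assoc)
  also have "\<dots> = - ((norm b)\<^sup>2 *\<^sub>R (b * qcnj b))"
    by (simp add: mult_qcnj_self imag_unit_mult_self [OF J] mult.assoc)
  also have "\<dots> = - ((norm b)\<^sup>2 * (norm b)\<^sup>2) *\<^sub>R 1"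
    by (simp add: mult_qcnj_self)
  finally show ?thesis
    using False by (simp add: sphere_rot_def imag_units_def)
qed (simp add: sphere_rot_def J)

lemma bij_betw_sphere_rot: "bij_betw (sphere_rot b) imag_units imag_units"
  by (rule bij_betw_byWitness [where f' = "sphere_rot (qcnj b)"])
    (auto simp: sphere_rot_imag_unit sphere_rot_sphere_rot_qcnj sphere_rot_qcnj_sphere_rot)

lemma inj_sphere_map:
  assumes R: "\<And>x y. bij_betw (R x y) imag_units imag_units"
    and g: "\<And>x y J. J \<in> imag_units \<Longrightarrow> g (slice_pt x y J) = slice_pt x y (R x y J)"
  shows "inj g"
proof (rule injI)
  fix q1 q2 assume eq: "g q1 = g q2"
  obtain J1 where J1: "J1 \<in> imag_units" "q1 = slice_pt (quat.Re q1) (norm (im_part q1)) J1"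
    by (rule slice_pt_polar)
  obtain J2 where J2: "J2 \<in> imag_units" "q2 = slice_pt (quat.Re q2) (norm (im_part q2)) J2"
    by (rule slice_pt_polar)
  have "slice_pt (quat.Re q1) (norm (im_part q1)) (R (quat.Re q1) (norm (im_part q1)) J1)
      = slice_pt (quat.Re q2) (norm (im_part q2)) (R (quat.Re q2) (norm (im_part q2)) J2)"
    using eq J1 J2 g by metis
  from slice_pt_eqD [OF bij_betw_apply [OF R J1(1)] bij_betw_apply [OF R J2(1)]
      norm_ge_zero norm_ge_zero this]
  have re: "quat.Re q1 = quat.Re q2" and im: "norm (im_part q1) = norm (im_part q2)"
    and rot: "norm (im_part q1) \<noteq> 0 \<Longrightarrow>
      R (quat.Re q1) (norm (im_part q1)) J1 = R (quat.Re q2) (norm (im_part q2)) J2"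
    by blast+
  show "q1 = q2"
  proof (cases "norm (im_part q1) = 0")
    case True
    then show ?thesis using J1 J2 re im by (metis slice_pt_real)
  next
    case False
    with rot re im have "J1 = J2"
      using R J1(1) J2(1) by (simp add: bij_betw_def inj_on_def)
    with J1 J2 re im show ?thesis by metis
  qed
qed

lemma bij_betw_sphere_map:
  assumes ssd: "symmetric_slice_domain \<Omega>"
    and R: "\<And>x y. bij_betw (R x y) imag_units imag_units"
    and g: "\<And>x y J. J \<in> imag_units \<Longrightarrow> g (slice_pt x y J) = slice_pt x y (R x y J)"
  shows "bij_betw g \<Omega> \<Omega>"
proof -
  have "g ` \<Omega> = \<Omega>"
  proof (intro equalityI subsetI)
    fix p assume "p \<in> g ` \<Omega>"
    then obtain q where "q \<in> \<Omega>" "p = g q" by blast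
    moreover obtain J where "J \<in> imag_units" "q = slice_pt (quat.Re q) (norm (im_part q)) J"
      by (rule slice_pt_polar)
    ultimately show "p \<in> \<Omega>"
      using g bij_betw_apply [OF R] symmetric_slice_domain_sphere [OF ssd] by metis
  next
    fix q assume "q \<in> \<Omega>"
    obtain K where K: "K \<in> imag_units" "q = slice_pt (quat.Re q) (norm (im_part q)) K"
      by (rule slice_pt_polar)
    then obtain J where J: "J \<in> imag_units" "R (quat.Re q) (norm (im_part q)) J = K"
      using R by (metis bij_betw_iff_bijections)
    then have "slice_pt (quat.Re q) (norm (im_part q)) J \<in> \<Omega>"
      using symmetric_slice_domain_sphere [OF ssd K(1) J(1)] K \<open>q \<in> \<Omega>\<close> by metis
    moreover have "g (slice_pt (quat.Re q) (norm (im_part q)) J) = q"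
      using g J K by metis
    ultimately show "q \<in> g ` \<Omega>" by force
  qed
  with inj_sphere_map [OF R g] show ?thesis
    by (simp add: bij_betw_def inj_on_subset [of g UNIV])
qed

text \<open>Since \<open>stem2 f\<close> is odd in \<open>y\<close> and \<open>sphere_rot\<close> is even in its first
  argument, using \<open>y = |Im q|\<close> agrees with any other representation \<open>q = x + yJ\<close>.\<close>

definition conj_transfer :: "(quat \<Rightarrow> quat) \<Rightarrow> quat \<Rightarrow> quat" where
  "conj_transfer f q =
     of_real (quat.Re q) + sphere_rot (stem2 f (quat.Re q, norm (im_part q))) (im_part q)"

lemma conj_transfer_slice_pt:
  assumes J: "J \<in> imag_units"
  shows "conj_transfer f (slice_pt x y J) = slice_pt x y (sphere_rot (stem2 f (x, y)) J)"
proof -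
  have "sphere_rot (stem2 f (x, \<bar>y\<bar>)) = sphere_rot (stem2 f (x, y))"
    using stem2_cnj_pt [of f "(x, y)"] by (simp add: abs_if sphere_rot_uminus)
  moreover have "conj_transfer f (slice_pt x y J)
      = of_real x + sphere_rot (stem2 f (x, \<bar>y\<bar>)) (y *\<^sub>R J)"
    by (simp add: conj_transfer_def Re_slice_pt [OF J] im_part_slice_pt [OF J]
        norm_im_part_slice_pt [OF J] norm_imag_unit [OF J])
  ultimately show ?thesis
    by (simp add: sphere_rot_scaleR slice_pt_eq_scaleR)
qed

lemma bij_betw_conj_transfer:
  "symmetric_slice_domain \<Omega> \<Longrightarrow> bij_betw (conj_transfer f) \<Omega> \<Omega>"
  by (rule bij_betw_sphere_map [OF _ bij_betw_sphere_rot conj_transfer_slice_pt])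

lemma reg_conj_eq_qcnj_conj_transfer:
  assumes ssd: "symmetric_slice_domain \<Omega>" and reg: "slice_regular \<Omega> f" and "q \<in> \<Omega>"
  shows "reg_conj f q = qcnj (f (conj_transfer f q))"
proof -
  obtain x y J where J: "J \<in> imag_units" and q: "q = slice_pt x y J"
    using slice_pt_polar by metis
  define K where "K = sphere_rot (stem2 f (x, y)) J"
  have K: "K \<in> imag_units"
    unfolding K_def by (rule sphere_rot_imag_unit [OF J])
  then have "slice_pt x y K \<in> \<Omega>"
    using symmetric_slice_domain_sphere [OF ssd J] \<open>q \<in> \<Omega>\<close> q by blast
  then have "f (slice_pt x y K) = stem1 f (x, y) + K * stem2 f (x, y)"
    by (rule slice_regular_representation [OF ssd reg K])
  also have "K * stem2 f (x, y) = - (stem2 f (x, y) * J)"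
    unfolding K_def by (rule sphere_rot_mult)
  finally have "qcnj (f (slice_pt x y K)) = qcnj (stem1 f (x, y)) + J * qcnj (stem2 f (x, y))"
    by (simp add: qcnj_diff qcnj_mult qcnj_imag_unit [OF J])
  then show ?thesis
    by (simp add: q K_def reg_conj_slice_pt [OF J] conj_transfer_slice_pt [OF J])
qed

lemma bij_betw_qcnj: "symmetric_slice_domain \<Omega> \<Longrightarrow> bij_betw qcnj \<Omega> \<Omega>"
  by (rule bij_betw_byWitness [where f' = qcnj]) (auto simp: qcnj_symmetric_slice_domain)

lemma norm_reg_conj_image_sphere:
  assumes ssd: "symmetric_slice_domain \<Omega>" and reg: "slice_regular \<Omega> f"
    and sphere: "\<forall>I\<in>imag_units. slice_pt x y I \<in> \<Omega>"
  shows "(\<lambda>I. h (norm (reg_conj f (slice_pt x y I)))) ` imag_units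
       = (\<lambda>I. h (norm (f (slice_pt x y I)))) ` imag_units"
proof -
  let ?R = "sphere_rot (stem2 f (x, y))"
  have "(\<lambda>I. h (norm (reg_conj f (slice_pt x y I)))) ` imag_units
      = (\<lambda>I. h (norm (f (slice_pt x y (?R I))))) ` imag_units"
    using sphere by (intro image_cong refl)
      (simp add: reg_conj_eq_qcnj_conj_transfer [OF ssd reg] conj_transfer_slice_pt norm_qcnj)
  also have "\<dots> = (\<lambda>I. h (norm (f (slice_pt x y I)))) ` (?R ` imag_units)"
    by (simp add: image_image)
  finally show ?thesis
    using bij_betw_sphere_rot by (metis bij_betw_imp_surj_on)
qed

lemma norm_reg_conj_image:
  assumes ssd: "symmetric_slice_domain \<Omega>" and reg: "slice_regular \<Omega> f"
  shows "(\<lambda>q. h (norm (reg_conj f q))) ` \<Omega> = (\<lambda>q. h (norm (f q))) ` \<Omega>"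
proof -
  have "(\<lambda>q. h (norm (reg_conj f q))) ` \<Omega> = (\<lambda>q. h (norm (f q))) ` (conj_transfer f ` \<Omega>)"
    by (simp add: image_image reg_conj_eq_qcnj_conj_transfer [OF ssd reg] norm_qcnj cong: image_cong)
  then show ?thesis
    using bij_betw_conj_transfer [OF ssd] by (metis bij_betw_imp_surj_on)
qed

lemma reg_conj_image:
  assumes ssd: "symmetric_slice_domain \<Omega>" and reg: "slice_regular \<Omega> f"
  shows "reg_conj f ` \<Omega> = qcnj ` f ` \<Omega>"
proof -
  have "reg_conj f ` \<Omega> = qcnj ` f ` conj_transfer f ` \<Omega>"
    by (simp add: image_image reg_conj_eq_qcnj_conj_transfer [OF ssd reg] cong: image_cong)
  then show ?thesis
    using bij_betw_conj_transfer [OF ssd] by (metis bij_betw_imp_surj_on)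
qed

lemma bij_betw_reg_conj_iff:
  assumes ssd1: "symmetric_slice_domain \<Omega>1" and ssd2: "symmetric_slice_domain \<Omega>2"
    and reg: "slice_regular \<Omega>1 f" and maps: "f ` \<Omega>1 \<subseteq> \<Omega>2"
  shows "bij_betw (reg_conj f) \<Omega>1 \<Omega>2 \<longleftrightarrow> bij_betw f \<Omega>1 \<Omega>2"
proof -
  have transfer: "bij_betw (conj_transfer f) \<Omega>1 \<Omega>1"
    by (rule bij_betw_conj_transfer [OF ssd1])
  then have maps': "(f \<circ> conj_transfer f) ` \<Omega>1 \<subseteq> \<Omega>2"
    using maps bij_betw_imp_surj_on [OF transfer] by (metis image_comp)
  have "bij_betw (reg_conj f) \<Omega>1 \<Omega>2 \<longleftrightarrow> bij_betw (qcnj \<circ> (f \<circ> conj_transfer f)) \<Omega>1 \<Omega>2"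
    by (rule bij_betw_cong) (simp add: reg_conj_eq_qcnj_conj_transfer [OF ssd1 reg])
  also have "\<dots> \<longleftrightarrow> bij_betw (f \<circ> conj_transfer f) \<Omega>1 \<Omega>2"
    by (rule bij_betw_comp_iff2 [OF bij_betw_qcnj [OF ssd2] maps', symmetric])
  also have "\<dots> \<longleftrightarrow> bij_betw f \<Omega>1 \<Omega>2"
    by (rule bij_betw_comp_iff [OF transfer, symmetric])
  finally show ?thesis .
qed

theorem proposition4p10:
  fixes \<Omega>1 \<Omega>2 :: "quat set" and f :: "quat \<Rightarrow> quat"
  assumes "symmetric_slice_domain \<Omega>1" and "symmetric_slice_domain \<Omega>2"
    and "slice_regular \<Omega>1 f" and "f ` \<Omega>1 \<subseteq> \<Omega>2"
  shows "(slice_regular \<Omega>1 (reg_conj f) \<and> reg_conj f ` \<Omega>1 \<subseteq> \<Omega>2)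
    \<and> (bij_betw (reg_conj f) \<Omega>1 \<Omega>2 \<longleftrightarrow> bij_betw f \<Omega>1 \<Omega>2)
    \<and> (\<forall>x y. (\<forall>I\<in>imag_units. slice_pt x y I \<in> \<Omega>1) \<longrightarrow>
           (SUP I\<in>imag_units. ereal (norm (f (slice_pt x y I))))
             = (SUP I\<in>imag_units. ereal (norm (reg_conj f (slice_pt x y I)))) \<and>
           (INF I\<in>imag_units. ereal (norm (f (slice_pt x y I))))
             = (INF I\<in>imag_units. ereal (norm (reg_conj f (slice_pt x y I)))))
    \<and> (SUP q\<in>\<Omega>1. ereal (norm (f q))) = (SUP q\<in>\<Omega>1. ereal (norm (reg_conj f q)))
    \<and> (INF q\<in>\<Omega>1. ereal (norm (f q))) = (INF q\<in>\<Omega>1. ereal (norm (reg_conj f q)))"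
proof -
  have "reg_conj f ` \<Omega>1 \<subseteq> \<Omega>2"
    using reg_conj_image [OF assms(1,3)] assms(4) qcnj_symmetric_slice_domain [OF assms(2)] by auto
  moreover note slice_regular_reg_conj [OF assms(1,3)]
    and bij_betw_reg_conj_iff [OF assms]
    and norm_reg_conj_image_sphere [OF assms(1,3), where h = ereal]
    and norm_reg_conj_image [OF assms(1,3), where h = ereal]
  ultimately show ?thesis
    by simp
qed

end
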